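(* Let $G$ be a structured quadratic-bilinear system given by $(\mathcal C,\mathcal K,\mathcal B,\mathcal N,\mathcal H)$ with structured generalized transfer functions, and $\widehat G$ the reduced-order system obtained by projection with $V,W\in\mathbb C^{n\times r}$ of full column rank. Let $\sigma_1,\sigma_2\in\mathbb C$ be such that $\mathcal C,\mathcal K,\mathcal B,\mathcal N$ can be evaluated at $\sigma_1,\sigma_2$, $\mathcal H$ at $(\sigma_1,\sigma_1)$, and $\mathcal K(\sigma_1),\mathcal K(\sigma_2)$ are invertible; assume $W^{\mathsf H}\mathcal K(\sigma_i)V$ is invertible for $i=1,2$. If $$\operatorname{span}(V)\supseteq\operatorname{span}\big(\mathcal K(\sigma_1)^{-1}\mathcal B(\sigma_1)\big),\qquad\operatorname{span}(W)\supseteq\operatorname{span}\big(\mathcal K(\sigma_2)^{-\mathsf H}\mathcal C(\sigma_2)^{\mathsf H}\big),$$ then $$G_1^{(B)}(\sigma_1)=\widehat G_1^{(B)}(\sigma_1),\quad G_1^{(B)}(\sigma_2)=\widehat G_1^{(B)}(\sigma_2),\quad G_2^{(N,(B))}(\sigma_1,\sigma_2)=\widehat G_2^{(N,(B))}(\sigma_1,\sigma_2),$$ $$G_3^{(H,(B),(B))}(\sigma_1,\sigma_1,\sigma_2)=\widehat G_3^{(H,(B),(B))}(\sigma_1,\sigma_1,\sigma_2).$$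
   Context: A structured quadratic-bilinear system (in frequency domain) with $n$ states, $m$ inputs and $p$ outputs is given by matrix-valued functions $\mathcal C:\mathbb C\to\mathbb C^{p\times n}$, $\mathcal K:\mathbb C\to\mathbb C^{n\times n}$, $\mathcal B:\mathbb C\to\mathbb C^{n\times m}$, $\mathcal N:\mathbb C\to\mathbb C^{n\times nm}$ with $\mathcal N(s)=[\mathcal N_1(s)\ \cdots\ \mathcal N_m(s)]$, $\mathcal N_j(s)\in\mathbb C^{n\times n}$, and $\mathcal H:\mathbb C\times\mathbb C\to\mathbb C^{n\times n^2}$. Its structured generalized transfer functions are $G_1^{(B)}(s_1)=\mathcal C(s_1)\mathcal K(s_1)^{-1}\mathcal B(s_1)$, $G_2^{(N,(B))}(s_1,s_2)=\mathcal C(s_2)\mathcal K(s_2)^{-1}\mathcal N(s_1)\big(I_m\otimes\mathcal K(s_1)^{-1}\mathcal B(s_1)\big)$, $G_3^{(H,(B),(B))}(s_1,s_2,s_3)=\mathcal C(s_3)\mathcal K(s_3)^{-1}\mathcal H(s_2,s_1)\big(\mathcal K(s_2)^{-1}\mathcal B(s_2)\otimes\mathcal K(s_1)^{-1}\mathcal B(s_1)\big)$, wherever the inverses exist; $\otimes$ is the Kronecker product. The reduced-order system obtained by projection with $V,W\in\mathbb C^{n\times r}$ is given by $\widehat{\mathcal C}(s)=\mathcal C(s)V$, $\widehat{\mathcal K}(s)=W^{\mathsf H}\mathcal K(s)V$, $\widehat{\mathcal B}(s)=W^{\mathsf H}\mathcal B(s)$, $\widehat{\mathcal N}(s)=W^{\mathsf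 H}\mathcal N(s)(I_m\otimes V)$, $\widehat{\mathcal H}(s_1,s_2)=W^{\mathsf H}\mathcal H(s_1,s_2)(V\otimes V)$, where $W^{\mathsf H}$ is the conjugate transpose and $\mathcal K(s)^{-\mathsf H}=(\mathcal K(s)^{-1})^{\mathsf H}$; its generalized transfer functions $\widehat G$ are defined by the same formulas with hatted functions. *)

theory Defs
  imports "HOL-Analysis.Analysis"
begin

text \<open>Dimensions are the cardinalities of finite index types; the Kronecker
  product uses product index types, ordered so that the first component is
  the (outer) block index.\<close>

definition kron :: "'a::times^'n^'m \<Rightarrow> 'a^'q^'p \<Rightarrow> 'a^('n \<times> 'q)^('m \<times> 'p)" where
  "kron A B = (\<chi> ik jl. A $ fst ik $ fst jl * B $ snd ik $ snd jl)"

definition ctrans :: "complex^'n^'m \<Rightarrow> complex^'m^'n" where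
  "ctrans A = (\<chi> i j. cnj (A $ j $ i))"

definition colspan :: "complex^'n^'m \<Rightarrow> (complex^'m) set" where
  "colspan A = vec.span (columns A)"

text \<open>Structured generalized transfer functions.  N(s) = [N_1(s) ... N_m(s)]
  is an n x nm matrix whose column index (j,k) is column k of block N_j(s).
  H(s1,s2) is n x n^2.\<close>

definition G1 :: "(complex \<Rightarrow> complex^'n^'p) \<Rightarrow> (complex \<Rightarrow> complex^'n^'n)
    \<Rightarrow> (complex \<Rightarrow> complex^'m^'n) \<Rightarrow> complex \<Rightarrow> complex^'m^'p" where
  "G1 C K B s1 = C s1 ** matrix_inv (K s1) ** B s1"

definition G2 :: "(complex \<Rightarrow> complex^'n^'p) \<Rightarrow> (complex \<Rightarrow> complex^'n^'n)
    \<Rightarrow> (complex \<Rightarrow> complex^'m^'n) \<Rightarrow> (complex \<Rightarrow> complex^('m \<times> 'n)^'n)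
    \<Rightarrow> complex \<Rightarrow> complex \<Rightarrow> complex^('m \<times> 'm)^'p" where
  "G2 C K B N s1 s2 =
     C s2 ** matrix_inv (K s2) ** N s1 ** kron (mat 1 :: complex^'m^'m) (matrix_inv (K s1) ** B s1)"

definition G3 :: "(complex \<Rightarrow> complex^'n^'p) \<Rightarrow> (complex \<Rightarrow> complex^'n^'n)
    \<Rightarrow> (complex \<Rightarrow> complex^'m^'n) \<Rightarrow> (complex \<Rightarrow> complex \<Rightarrow> complex^('n \<times> 'n)^'n)
    \<Rightarrow> complex \<Rightarrow> complex \<Rightarrow> complex \<Rightarrow> complex^('m \<times> 'm)^'p" where
  "G3 C K B H s1 s2 s3 =
     C s3 ** matrix_inv (K s3) ** H s2 s1 **
       kron (matrix_inv (K s2) ** B s2) (matrix_inv (K s1) ** B s1)"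

definition redC :: "(complex \<Rightarrow> complex^'n^'p) \<Rightarrow> complex^'r^'n \<Rightarrow> complex \<Rightarrow> complex^'r^'p" where
  "redC C V s = C s ** V"

definition redK :: "(complex \<Rightarrow> complex^'n^'n) \<Rightarrow> complex^'r^'n \<Rightarrow> complex^'r^'n
    \<Rightarrow> complex \<Rightarrow> complex^'r^'r" where
  "redK K V W s = ctrans W ** K s ** V"

definition redB :: "(complex \<Rightarrow> complex^'m^'n) \<Rightarrow> complex^'r^'n \<Rightarrow> complex \<Rightarrow> complex^'m^'r" where
  "redB B W s = ctrans W ** B s"

definition redN :: "(complex \<Rightarrow> complex^('m::finite \<times> 'n)^'n) \<Rightarrow> complex^'r^'n \<Rightarrow> complex^'r^'n
    \<Rightarrow> complex \<Rightarrow> complex^('m \<times> 'r)^'r" where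
  "redN N V W s = ctrans W ** N s ** kron (mat 1 :: complex^'m^'m) V"

definition redH :: "(complex \<Rightarrow> complex \<Rightarrow> complex^('n \<times> 'n)^'n) \<Rightarrow> complex^'r^'n \<Rightarrow> complex^'r^'n
    \<Rightarrow> complex \<Rightarrow> complex \<Rightarrow> complex^('r \<times> 'r)^'r" where
  "redH H V W s1 s2 = ctrans W ** H s1 s2 ** kron V V"

end

theory Submission
  imports Defs
begin

text \<open>The span condition on \<open>V\<close> factors \<open>K(\<sigma>\<^sub>1)\<^sup>-\<^sup>1B(\<sigma>\<^sub>1) = VY\<close>; for any
  left projector \<open>L\<close> with \<open>LK(\<sigma>\<^sub>1)V\<close> invertible the reduced solve then returns \<open>Y\<close>
  exactly, since \<open>LB(\<sigma>\<^sub>1) = (LK(\<sigma>\<^sub>1)V)Y\<close>.  Dually, the span condition on \<open>W\<close> gives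
  \<open>C(\<sigma>\<^sub>2)K(\<sigma>\<^sub>2)\<^sup>-\<^sup>1 = QW\<^sup>H\<close> and \<open>C(\<sigma>\<^sub>2)V(W\<^sup>HK(\<sigma>\<^sub>2)V)\<^sup>-\<^sup>1 = Q\<close>.  Substituting both
  identities into the transfer functions, and moving \<open>V\<close> through \<open>I \<otimes> \<cdot>\<close> and \<open>\<cdot> \<otimes> \<cdot>\<close> by
  the mixed-product rule of the Kronecker product, makes the full and reduced
  expressions coincide.\<close>

lemma matrix_inv_right:
  fixes A :: "'a::semiring_1^'n^'m"
  assumes "invertible A"
  shows "A ** matrix_inv A = mat 1"
  using someI_ex[OF assms[unfolded invertible_def]] by (simp add: matrix_inv_def)

lemma matrix_inv_left:
  fixes A :: "'a::semiring_1^'n^'m"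
  assumes "invertible A"
  shows "matrix_inv A ** A = mat 1"
  using someI_ex[OF assms[unfolded invertible_def]] by (simp add: matrix_inv_def)

lemma ctrans_matrix_mul: "ctrans (A ** B) = ctrans B ** ctrans (A::complex^'n^'m)"
  by (simp add: ctrans_def matrix_matrix_mult_def vec_eq_iff mult.commute)

lemma ctrans_ctrans [simp]: "ctrans (ctrans A) = A"
  by (simp add: ctrans_def vec_eq_iff)

lemma kron_mixed_product:
  fixes A :: "'a::comm_semiring_1^'n^'m" and B :: "'a^'q^'p"
    and C :: "'a^'s^'n" and D :: "'a^'t^'q"
  shows "kron A B ** kron C D = kron (A ** C) (B ** D)"
  by (simp add: kron_def matrix_matrix_mult_def vec_eq_iff sum_product sum.cartesian_product
      case_prod_beta mult_ac)

lemma colspan_eq_range: "colspan A = range ((*v) A)"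
proof
  show "colspan A \<subseteq> range ((*v) A)"
    unfolding colspan_def
  proof (rule vec.span_minimal)
    have "A *v axis j 1 = column j A" for j
      by (simp add: column_def matrix_vector_mult_def axis_def vec_eq_iff if_distrib cong: if_cong)
    then show "columns A \<subseteq> range ((*v) A)"
      by (auto simp: columns_def) (metis rangeI)
    show "vec.subspace (range ((*v) A))"
      using vec.linear_subspace_image[OF matrix_vector_mul_linear_gen vec.subspace_UNIV] .
  qed
  show "range ((*v) A) \<subseteq> colspan A"
    unfolding colspan_def using matrix_vector_mult_in_columnspace_gen by blast
qed

lemma colspan_subset_imp_factor:
  fixes A :: "complex^'k^'n" and V :: "complex^'r^'n"
  assumes "colspan A \<subseteq> colspan V"
  obtains Y where "A = V ** Y"
proof -
  have "column j A \<in> colspan A" for j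
    unfolding colspan_def by (rule vec.span_base) (auto simp: columns_def)
  then have "\<forall>j. \<exists>y. column j A = V *v y"
    using assms by (auto simp: colspan_eq_range)
  then obtain y where y: "\<And>j. column j A = V *v y j" by metis
  have "A = V ** (\<chi> i j. y j $ i)"
    using y by (simp add: vec_eq_iff column_def matrix_vector_mult_def matrix_matrix_mult_def)
  then show ?thesis by (rule that)
qed

lemma petrov_galerkin_right:
  fixes K :: "'a::field^'n^'n" and V :: "'a^'r^'n" and L :: "'a^'n^'r"
  assumes "invertible K" "invertible (L ** K ** V)" "matrix_inv K ** B = V ** Y"
  shows "matrix_inv (L ** K ** V) ** (L ** B) = Y"
proof -
  have "B = K ** (V ** Y)"
    by (metis assms(1,3) matrix_inv_right matrix_mul_assoc matrix_mul_lid)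
  then have "L ** B = (L ** K ** V) ** Y"
    by (simp add: matrix_mul_assoc)
  then show ?thesis
    by (metis assms(2) matrix_inv_left matrix_mul_assoc matrix_mul_lid)
qed

lemma petrov_galerkin_left:
  fixes K :: "'a::field^'n^'n" and V :: "'a^'r^'n" and L :: "'a^'n^'r"
  assumes "invertible K" "invertible (L ** K ** V)" "C ** matrix_inv K = Q ** L"
  shows "C ** V ** matrix_inv (L ** K ** V) = Q"
proof -
  have "C = Q ** L ** K"
    by (metis assms(1,3) matrix_inv_left matrix_mul_assoc matrix_mul_rid)
  then have "C ** V = Q ** (L ** K ** V)"
    by (simp add: matrix_mul_assoc)
  then show ?thesis
    by (metis assms(2) matrix_inv_right matrix_mul_assoc matrix_mul_rid)
qed

lemma reduced_right_primitive:
  assumes "invertible (K s)" "invertible (redK K V W s)" "matrix_inv (K s) ** B s = V ** Y"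
  shows "matrix_inv (redK K V W s) ** redB B W s = Y"
  using petrov_galerkin_right[OF assms[unfolded redK_def]] by (simp add: redK_def redB_def)

lemma reduced_left_primitive:
  assumes "invertible (K s)" "invertible (redK K V W s)" "C s ** matrix_inv (K s) = Q ** ctrans W"
  shows "redC C V s ** matrix_inv (redK K V W s) = Q"
  using petrov_galerkin_left[OF assms[unfolded redK_def]] by (simp add: redK_def redC_def)

lemma G1_interpolation_right:
  assumes "invertible (K s)" "invertible (redK K V W s)" "matrix_inv (K s) ** B s = V ** Y"
  shows "G1 C K B s = G1 (redC C V) (redK K V W) (redB B W) s"
  using reduced_right_primitive[where K = K and B = B, OF assms]
  by (simp add: G1_def redC_def assms(3) flip: matrix_mul_assoc)

lemma G1_interpolation_left:
  assumes "invertible (K s)" "invertible (redK K V W s)" "C s ** matrix_inv (K s) = Q ** ctrans W"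
  shows "G1 C K B s = G1 (redC C V) (redK K V W) (redB B W) s"
  using reduced_left_primitive[where K = K and C = C, OF assms]
  by (simp add: G1_def redB_def assms(3) flip: matrix_mul_assoc)

lemma G2_interpolation:
  fixes N :: "complex \<Rightarrow> complex^('m::finite \<times> 'n)^'n"
  assumes "invertible (K s1)" "invertible (redK K V W s1)" "matrix_inv (K s1) ** B s1 = V ** Y"
    and "invertible (K s2)" "invertible (redK K V W s2)" "C s2 ** matrix_inv (K s2) = Q ** ctrans W"
  shows "G2 C K B N s1 s2 = G2 (redC C V) (redK K V W) (redB B W) (redN N V W) s1 s2"
proof -
  let ?I = "mat 1 :: complex^'m^'m"
  have "G2 (redC C V) (redK K V W) (redB B W) (redN N V W) s1 s2
      = Q ** ctrans W ** N s1 ** (kron ?I V ** kron ?I Y)"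
    using reduced_right_primitive[where K = K and B = B, OF assms(1-3)] reduced_left_primitive[where K = K and C = C, OF assms(4-6)]
    by (simp add: G2_def redN_def matrix_mul_assoc)
  also have "\<dots> = C s2 ** matrix_inv (K s2) ** N s1 ** kron ?I (matrix_inv (K s1) ** B s1)"
    by (simp add: kron_mixed_product assms(3,6))
  finally show ?thesis
    by (simp add: G2_def)
qed

lemma G3_interpolation:
  assumes "invertible (K s1)" "invertible (redK K V W s1)" "matrix_inv (K s1) ** B s1 = V ** Y1"
    and "invertible (K s2)" "invertible (redK K V W s2)" "matrix_inv (K s2) ** B s2 = V ** Y2"
    and "invertible (K s3)" "invertible (redK K V W s3)" "C s3 ** matrix_inv (K s3) = Q ** ctrans W"
  shows "G3 C K B H s1 s2 s3 = G3 (redC C V) (redK K V W) (redB B W) (redH H V W) s1 s2 s3"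
proof -
  have "G3 (redC C V) (redK K V W) (redB B W) (redH H V W) s1 s2 s3
      = Q ** ctrans W ** H s2 s1 ** (kron V V ** kron Y2 Y1)"
    using reduced_right_primitive[where K = K and B = B, OF assms(1-3)] reduced_right_primitive[where K = K and B = B, OF assms(4-6)]
      reduced_left_primitive[where K = K and C = C, OF assms(7-9)]
    by (simp add: G3_def redH_def matrix_mul_assoc)
  also have "\<dots> = C s3 ** matrix_inv (K s3) ** H s2 s1 **
      kron (matrix_inv (K s2) ** B s2) (matrix_inv (K s1) ** B s1)"
    by (simp add: kron_mixed_product assms(3,6,9))
  finally show ?thesis
    by (simp add: G3_def)
qed

theorem corollary4p5:
  fixes C :: "complex \<Rightarrow> complex^'n^'p"
    and K :: "complex \<Rightarrow> complex^'n^'n"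
    and B :: "complex \<Rightarrow> complex^'m^'n"
    and N :: "complex \<Rightarrow> complex^('m \<times> 'n)^'n"
    and H :: "complex \<Rightarrow> complex \<Rightarrow> complex^('n \<times> 'n)^'n"
    and V W :: "complex^'r^'n"
    and \<sigma>1 \<sigma>2 :: complex
  assumes rankV: "rank V = CARD('r)"
    and rankW: "rank W = CARD('r)"
    and invK1: "invertible (K \<sigma>1)"
    and invK2: "invertible (K \<sigma>2)"
    and invKr1: "invertible (ctrans W ** K \<sigma>1 ** V)"
    and invKr2: "invertible (ctrans W ** K \<sigma>2 ** V)"
    and spanV: "colspan (matrix_inv (K \<sigma>1) ** B \<sigma>1) \<subseteq> colspan V"
    and spanW: "colspan (ctrans (matrix_inv (K \<sigma>2)) ** ctrans (C \<sigma>2)) \<subseteq> colspan W"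
  shows "G1 C K B \<sigma>1 = G1 (redC C V) (redK K V W) (redB B W) \<sigma>1 \<and>
         G1 C K B \<sigma>2 = G1 (redC C V) (redK K V W) (redB B W) \<sigma>2 \<and>
         G2 C K B N \<sigma>1 \<sigma>2 = G2 (redC C V) (redK K V W) (redB B W) (redN N V W) \<sigma>1 \<sigma>2 \<and>
         G3 C K B H \<sigma>1 \<sigma>1 \<sigma>2 = G3 (redC C V) (redK K V W) (redB B W) (redH H V W) \<sigma>1 \<sigma>1 \<sigma>2"
proof -
  obtain Y where Y: "matrix_inv (K \<sigma>1) ** B \<sigma>1 = V ** Y"
    using colspan_subset_imp_factor[OF spanV] .
  obtain U where "ctrans (matrix_inv (K \<sigma>2)) ** ctrans (C \<sigma>2) = W ** U"
    using colspan_subset_imp_factor[OF spanW] .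
  then have Q: "C \<sigma>2 ** matrix_inv (K \<sigma>2) = ctrans U ** ctrans W"
    by (metis ctrans_ctrans ctrans_matrix_mul)
  have invKr: "invertible (redK K V W \<sigma>1)" "invertible (redK K V W \<sigma>2)"
    using invKr1 invKr2 by (simp_all add: redK_def)
  show ?thesis
    using G1_interpolation_right[where C = C and K = K and B = B, OF invK1 invKr(1) Y]
      G1_interpolation_left[where C = C and K = K and B = B, OF invK2 invKr(2) Q]
      G2_interpolation[where C = C and K = K and B = B and N = N,
        OF invK1 invKr(1) Y invK2 invKr(2) Q]
      G3_interpolation[where C = C and K = K and B = B and H = H,
        OF invK1 invKr(1) Y invK1 invKr(1) Y invK2 invKr(2) Q]
    by blast
qed

end
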